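(* Let $\Lambda=(\mathbf a_1\ \cdots\ \mathbf a_m)$ be an $R$-characteristic map over $K$, and let $(\mathbf r^1,1),\dots,(\mathbf r^k,k)$ be reduced marked row vectors in $R^m$ with markings $1,\dots,k$ respectively ($k\ge1$). Then the matrix $\operatorname{proj}_{k_1}M(\Lambda;\mathbf r^1,\dots,\mathbf r^k)$, with its column $k_2$ relabeled $k$, is D-J equivalent (equal up to left multiplication by $GL_{n+k-1}(R)$) to $M\big(\Lambda^{\mathbf r^k};(\mathbf r^1)^{\mathbf r^k},\dots,(\mathbf r^{k-1})^{\mathbf r^k}\big)$.
   Context: $R\in\{\mathbb Z,\mathbb Z_2\}$; $K$ is an $(n-1)$-dimensional star-shaped simplicial sphere on $[m]$; an $R$-characteristic map $\Lambda:[m]\to R^n$ sends the vertices of each $(n-1)$-face to a $\mathbb Z$-basis of $\mathbb Z^n$ ($R=\mathbb Z$) or a basis of $\mathbb Z_2^n$ ($R=\mathbb Z_2$); it is written as the $n\times m$ matrix with columns $\mathbf a_i=\Lambda(i)$. A marked row vector is a pair $(\mathbf r,v)$ with $\mathbf r=(r_1,\dots,r_m)\in R^m$ and $v\in[m]$ (the marking); it is reduced if $r_v=0$. For marked row vectors $(\mathbf r^t,t)$, $t=1,\dots,k$, $M(\Lambda;\mathbf r^1,\dots,\mathbf r^k)$ is the $(n+k)\times(m+k)$ matrix with columns labeled $1_1,1_2,2_1,2_2,\dots,k_1,k_2,k+1,\dots,m$, whose top $n$ rows have $\mathbf a_i$ in columns $i_1$ ($i\le k$) and $i$ ($i>k$)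 and $0$ in columns $i_2$, and whose row $n+t$ has entry $r^t_i-\delta_{it}$ in column $i_1$, $\delta_{it}$ in column $i_2$ ($i\le k$), and $r^t_i$ in column $i$ ($i>k$). For a matrix $M$ and a column $c$ of $M$ which is part of a basis of $R^N$ (primitive), $\operatorname{proj}_cM$ is obtained by choosing $g\in GL_N(R)$ with $g\,M_c$ the last standard basis vector and deleting from $gM$ the last row and column $c$ (defined up to left multiplication by $GL_{N-1}(R)$). For a reduced marked row vector $(\mathbf s,w)$, $\Lambda^{\mathbf s}$ is the $n\times m$ matrix whose $w$-th column is $\mathbf a_w$ and whose $i$-th column is $\mathbf a_i+s_i\mathbf a_w$ for $i\ne w$. For reduced marked row vectors $(\mathbf r,v)$, $(\mathbf s,w)$ with $v\ne w$, $\mathbf r^{\mathbf s}$ is the marked row vector with marking $v$ and entries $(\mathbf r^{\mathbf s})_w=r_w$ and $(\mathbf r^{\mathbf s})_i=r_i+s_ir_w$ for $i\ne w$. *)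

theory Defs
  imports "HOL-Analysis.Analysis" "HOL-Library.Z2" "Jordan_Normal_Form.Matrix"
begin

(* Conventions: vertices are 1..m; a matrix with columns labelled 1..m is a
   Jordan_Normal_Form matrix whose 0-based column (i-1) is the column labelled i.
   A row vector r in R^m is a vec of dimension m with r_i = r $ (i-1). *)

definition ring_iso_to :: "('a::comm_ring_1 \<Rightarrow> 'b::comm_ring_1) \<Rightarrow> bool" where
  "ring_iso_to f \<longleftrightarrow> bij f \<and> f 1 = 1 \<and>
     (\<forall>x y. f (x + y) = f x + f y \<and> f (x * y) = f x * f y)"

definition R_is_Z_or_Z2 :: "'a::comm_ring_1 itself \<Rightarrow> bool" where
  "R_is_Z_or_Z2 _ \<longleftrightarrow>
     (\<exists>f::'a \<Rightarrow> int. ring_iso_to f) \<or> (\<exists>f::'a \<Rightarrow> bit. ring_iso_to f)"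

definition simplicial_complex_on :: "nat set set \<Rightarrow> nat \<Rightarrow> bool" where
  "simplicial_complex_on K m \<longleftrightarrow>
     (\<forall>\<sigma>\<in>K. \<sigma> \<subseteq> {1..m}) \<and>
     (\<forall>\<sigma>\<in>K. \<forall>\<tau>. \<tau> \<subseteq> \<sigma> \<longrightarrow> \<tau> \<in> K) \<and>
     (\<forall>i\<in>{1..m}. {i} \<in> K)"

definition polyhedron :: "nat set set \<Rightarrow> (nat \<Rightarrow> 'v::real_vector) \<Rightarrow> 'v set" where
  "polyhedron K w = (\<Union>\<sigma>\<in>K. convex hull (w ` \<sigma>))"

definition geometric_realization :: "nat set set \<Rightarrow> (nat \<Rightarrow> 'v::real_vector) \<Rightarrow> bool" where
  "geometric_realization K w \<longleftrightarrow>
     (\<forall>\<sigma>\<in>K. inj_on w \<sigma> \<and> \<not> affine_dependent (w ` \<sigma>)) \<and>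
     (\<forall>\<sigma>\<in>K. \<forall>\<tau>\<in>K. convex hull (w ` \<sigma>) \<inter> convex hull (w ` \<tau>)
                       = convex hull (w ` (\<sigma> \<inter> \<tau>)))"

definition star_shaped_sphere ::
  "'n::finite itself \<Rightarrow> nat set set \<Rightarrow> nat \<Rightarrow> nat \<Rightarrow> bool" where
  "star_shaped_sphere _ K m n \<longleftrightarrow>
     CARD('n) = n \<and> simplicial_complex_on K m \<and>
     (\<forall>\<sigma>\<in>K. card \<sigma> \<le> n) \<and> (\<exists>\<sigma>\<in>K. card \<sigma> = n) \<and>
     (\<exists>(w::nat \<Rightarrow> real^'n) p.
        geometric_realization K w \<and>
        polyhedron K w homeomorphic sphere (0::real^'n) 1 \<and>
        (\<forall>u. u \<noteq> 0 \<longrightarrow> (\<exists>!x. x \<in> polyhedron K w \<and> (\<exists>t\<ge>0. x = p + t *\<^sub>R u))))"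

(* Lambda (n x m) sends the vertices of each (n-1)-face of K to a basis of R^n:
   every v in R^n is a unique R-linear combination of the a_i, i in sigma *)
definition characteristic_map :: "nat set set \<Rightarrow> nat \<Rightarrow> nat \<Rightarrow> 'a::comm_ring_1 mat \<Rightarrow> bool" where
  "characteristic_map K m n \<Lambda> \<longleftrightarrow> \<Lambda> \<in> carrier_mat n m \<and>
     (\<forall>\<sigma>\<in>K. card \<sigma> = n \<longrightarrow>
        (\<forall>v \<in> carrier_vec n. \<exists>!c::nat \<Rightarrow> 'a.
            (\<forall>i. i \<notin> \<sigma> \<longrightarrow> c i = 0) \<and>
            (\<forall>\<rho><n. v $ \<rho> = (\<Sum>i\<in>\<sigma>. c i * \<Lambda> $$ (\<rho>, i - 1)))))"

definition reduced_marked :: "nat \<Rightarrow> 'a::zero vec \<Rightarrow> nat \<Rightarrow> bool" where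
  "reduced_marked m r v \<longleftrightarrow> r \<in> carrier_vec m \<and> v \<in> {1..m} \<and> r $ (v - 1) = 0"

(* Columns (0-based positions) are in the order
   1_1, 1_2, 2_1, 2_2, ..., k_1, k_2, k+1, ..., m:
   position 2(i-1) is i_1, position 2(i-1)+1 is i_2 (i \<le> k),
   position k+i-1 is i (i > k). Row n+t-1 (0-based) is the row of r^t. *)
definition M_mat :: "'a::comm_ring_1 mat \<Rightarrow> 'a vec list \<Rightarrow> 'a mat" where
  "M_mat \<Lambda> rs = (let n = dim_row \<Lambda>; m = dim_col \<Lambda>; k = length rs in
     mat (n + k) (m + k) (\<lambda>(\<rho>, c).
       let i = (if c < 2 * k then c div 2 + 1 else c - k + 1);
           second = (c < 2 * k \<and> c mod 2 = 1) in
       if \<rho> < n then (if second then 0 else \<Lambda> $$ (\<rho>, i - 1))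
       else (let t = \<rho> - n + 1; r = rs ! (t - 1);
                 \<delta> = (if i = t then 1 else 0) in
             if c < 2 * k then (if second then \<delta> else r $ (i - 1) - \<delta>)
             else r $ (i - 1))))"

definition delete_last_row_col :: "'a mat \<Rightarrow> nat \<Rightarrow> 'a mat" where
  "delete_last_row_col A c = mat (dim_row A - 1) (dim_col A - 1)
     (\<lambda>(i, j). A $$ (i, if j < c then j else Suc j))"

(* all representatives of proj_c A: choose g in GL_N(R) with g A_c = e_N,
   and delete from gA the last row and column c *)
definition proj_reps :: "'a::comm_ring_1 mat \<Rightarrow> nat \<Rightarrow> 'a mat set" where
  "proj_reps A c = {delete_last_row_col (g * A) c | g.
     g \<in> carrier_mat (dim_row A) (dim_row A) \<and> invertible_mat g \<and>
     g *\<^sub>v col A c = unit_vec (dim_row A) (dim_row A - 1)}"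

definition DJ_equiv :: "'a::comm_ring_1 mat \<Rightarrow> 'a mat \<Rightarrow> bool" where
  "DJ_equiv A B \<longleftrightarrow> (\<exists>h. h \<in> carrier_mat (dim_row A) (dim_row A) \<and>
     invertible_mat h \<and> B \<in> carrier_mat (dim_row A) (dim_col A) \<and> A = h * B)"

definition Lambda_twist :: "'a::comm_ring_1 mat \<Rightarrow> 'a vec \<Rightarrow> nat \<Rightarrow> 'a mat" where
  "Lambda_twist \<Lambda> s w = mat (dim_row \<Lambda>) (dim_col \<Lambda>) (\<lambda>(\<rho>, j).
     if j = w - 1 then \<Lambda> $$ (\<rho>, j) else \<Lambda> $$ (\<rho>, j) + s $ j * \<Lambda> $$ (\<rho>, w - 1))"

definition row_twist :: "'a::comm_ring_1 vec \<Rightarrow> 'a vec \<Rightarrow> nat \<Rightarrow> 'a vec" where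
  "row_twist r s w = vec (dim_vec r) (\<lambda>j.
     if j = w - 1 then r $ j else r $ j + s $ j * r $ (w - 1))"

end

(* Column k_1 of M(Lambda; r^1, ..., r^k) has the entry r^k_k - 1 = -1 in its last row.  Adding
   suitable multiples of the last row to the other rows and negating the last row turns this column
   into the last unit vector; after deleting that row and column, column i_1 becomes
   a_i + r^k_i a_k on top of r^t_i + r^k_i r^t_k - delta_it, which is the matrix of the twisted data.
   Any two admissible row operations differ by an invertible matrix fixing the last unit vector,
   and deleting the last row and column of such a matrix keeps it invertible, so all
   representatives of the projection are D-J equivalent. *)

theory Submission
  imports Defs
begin

lemma invertible_matE:
  fixes A :: "'a::comm_ring_1 mat"
  assumes A: "A \<in> carrier_mat n n" and inv: "invertible_mat A"
  obtains B where "B \<in> carrier_mat n n" "A * B = 1\<^sub>m n" "B * A = 1\<^sub>m n"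
proof -
  obtain B where AB: "A * B = 1\<^sub>m n" and BA: "B * A = 1\<^sub>m (dim_row B)"
    using inv A unfolding invertible_mat_def inverts_mat_def by auto
  have "dim_row B = n"
    using BA A by (metis carrier_matD(2) index_mult_mat(3) index_one_mat(3))
  moreover have "dim_col B = n"
    using AB by (metis index_mult_mat(3) index_one_mat(3))
  ultimately show thesis
    using that AB BA by auto
qed

lemma invertible_matI:
  fixes A :: "'a::comm_ring_1 mat"
  assumes "A \<in> carrier_mat n n" "B \<in> carrier_mat n n" "A * B = 1\<^sub>m n" "B * A = 1\<^sub>m n"
  shows "invertible_mat A"
  using assms unfolding invertible_mat_def inverts_mat_def by auto

lemma invertible_mat_mult:
  fixes A B :: "'a::comm_ring_1 mat"
  assumes A: "A \<in> carrier_mat n n" and B: "B \<in> carrier_mat n n"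
    and "invertible_mat A" "invertible_mat B"
  shows "invertible_mat (A * B)"
proof -
  obtain A' where A': "A' \<in> carrier_mat n n" "A * A' = 1\<^sub>m n" "A' * A = 1\<^sub>m n"
    using invertible_matE[OF A \<open>invertible_mat A\<close>] .
  obtain B' where B': "B' \<in> carrier_mat n n" "B * B' = 1\<^sub>m n" "B' * B = 1\<^sub>m n"
    using invertible_matE[OF B \<open>invertible_mat B\<close>] .
  have "(A * B) * (B' * A') = A * (B * (B' * A'))"
    using A B A' B' by (intro assoc_mult_mat) auto
  also have "\<dots> = A * ((B * B') * A')"
    using B A' B' by (subst assoc_mult_mat[of B n n B' n A']) auto
  also have "\<dots> = 1\<^sub>m n"
    unfolding B'(2) using A A' by simp
  finally have right: "(A * B) * (B' * A') = 1\<^sub>m n" .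
  have "(B' * A') * (A * B) = B' * (A' * (A * B))"
    using A B A' B' by (intro assoc_mult_mat) auto
  also have "\<dots> = B' * ((A' * A) * B)"
    using A B A' by (subst assoc_mult_mat[of A' n n A n B]) auto
  also have "\<dots> = 1\<^sub>m n"
    unfolding A'(3) using B B' by simp
  finally have left: "(B' * A') * (A * B) = 1\<^sub>m n" .
  show ?thesis
    using A B A' B' right left by (intro invertible_matI) auto
qed

lemma col_eq_mult_unit_vec:
  fixes A :: "'a::comm_ring_1 mat"
  assumes "A \<in> carrier_mat nr nc" "j < nc"
  shows "col A j = A *\<^sub>v unit_vec nc j"
  using col_mult2[of A nr nc "1\<^sub>m nc" nc j] assms by simp

lemma dim_delete_last_row_col [simp]:
  "dim_row (delete_last_row_col A c) = dim_row A - 1"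
  "dim_col (delete_last_row_col A c) = dim_col A - 1"
  by (simp_all add: delete_last_row_col_def)

lemma delete_last_row_col_carrier:
  "A \<in> carrier_mat nr nc \<Longrightarrow> delete_last_row_col A c \<in> carrier_mat (nr - 1) (nc - 1)"
  unfolding carrier_mat_def by simp

lemma index_delete_last_row_col [simp]:
  "i < dim_row A - 1 \<Longrightarrow> j < dim_col A - 1 \<Longrightarrow>
    delete_last_row_col A c $$ (i, j) = A $$ (i, if j < c then j else Suc j)"
  by (simp add: delete_last_row_col_def)

lemma delete_last_row_col_one: "delete_last_row_col (1\<^sub>m N) (N - 1) = 1\<^sub>m (N - 1)"
  by (rule eq_matI) auto

text \<open>Deleting the last row and column is multiplicative on matrices whose last column is the
  last unit vector: these are block lower triangular with a one-by-one corner block.\<close>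

lemma delete_last_row_col_mult:
  fixes h X :: "'a::comm_ring_1 mat"
  assumes h: "h \<in> carrier_mat N N" and h_last: "col h (N - 1) = unit_vec N (N - 1)"
    and X: "X \<in> carrier_mat N nc" and N: "0 < N"
  shows "delete_last_row_col (h * X) c = delete_last_row_col h (N - 1) * delete_last_row_col X c"
proof (rule eq_matI)
  fix i j
  assume "i < dim_row (delete_last_row_col h (N - 1) * delete_last_row_col X c)"
    and "j < dim_col (delete_last_row_col h (N - 1) * delete_last_row_col X c)"
  with h X have i: "i < N - 1" and j: "j < nc - 1" by auto
  define j' where "j' = (if j < c then j else Suc j)"
  have j': "j' < nc" using j by (auto simp: j'_def)
  have "h $$ (i, N - 1) = col h (N - 1) $ i" using h i by simp
  then have corner: "h $$ (i, N - 1) = 0" using h_last i by simp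
  have "delete_last_row_col (h * X) c $$ (i, j) = (\<Sum>l<Suc (N - 1). h $$ (i, l) * X $$ (l, j'))"
    using h X i j j' N by (simp add: j'_def scalar_prod_def atLeast0LessThan)
  also have "\<dots> = (\<Sum>l<N - 1. h $$ (i, l) * X $$ (l, j'))"
    using corner by simp
  also have "\<dots> = (delete_last_row_col h (N - 1) * delete_last_row_col X c) $$ (i, j)"
    using h X i j by (simp add: j'_def scalar_prod_def atLeast0LessThan)
  finally show "delete_last_row_col (h * X) c $$ (i, j)
    = (delete_last_row_col h (N - 1) * delete_last_row_col X c) $$ (i, j)" .
qed (use h X in auto)

lemma invertible_delete_last_row_col:
  fixes h :: "'a::comm_ring_1 mat"
  assumes h: "h \<in> carrier_mat N N" and h_last: "col h (N - 1) = unit_vec N (N - 1)"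
    and inv: "invertible_mat h" and N: "0 < N"
  shows "invertible_mat (delete_last_row_col h (N - 1))"
proof -
  obtain h' where h': "h' \<in> carrier_mat N N" "h * h' = 1\<^sub>m N" "h' * h = 1\<^sub>m N"
    using invertible_matE[OF h inv] .
  have "col h' (N - 1) = h' *\<^sub>v col h (N - 1)"
    unfolding h_last using col_eq_mult_unit_vec[OF h'(1)] N by simp
  also have "\<dots> = unit_vec N (N - 1)"
    using h h' N by (simp flip: col_mult2)
  finally have h'_last: "col h' (N - 1) = unit_vec N (N - 1)" .
  show ?thesis
    using delete_last_row_col_mult[OF h h_last h'(1) N, of "N - 1",
        unfolded h'(2) delete_last_row_col_one, symmetric]
      delete_last_row_col_mult[OF h'(1) h'_last h N, of "N - 1",
        unfolded h'(3) delete_last_row_col_one, symmetric] h h'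
    by (intro invertible_matI[of _ "N - 1" "delete_last_row_col h' (N - 1)"]) auto
qed

lemma proj_repsE:
  assumes "P \<in> proj_reps A c"
  obtains g where "g \<in> carrier_mat (dim_row A) (dim_row A)" "invertible_mat g"
    "g *\<^sub>v col A c = unit_vec (dim_row A) (dim_row A - 1)" "P = delete_last_row_col (g * A) c"
  using assms that unfolding proj_reps_def mem_Collect_eq by (elim exE conjE) simp

text \<open>The projection is well defined up to D-J equivalence: two choices \<open>g, g'\<close> differ by
  \<open>g g'\<^sup>-\<^sup>1\<close>, which fixes the last unit vector.\<close>

lemma proj_reps_DJ_equiv:
  fixes A :: "'a::comm_ring_1 mat"
  assumes P: "P \<in> proj_reps A c" and Q: "Q \<in> proj_reps A c" and pos: "0 < dim_row A"
  shows "DJ_equiv P Q"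
proof -
  define N where "N = dim_row A"
  define nc where "nc = dim_col A"
  have N: "0 < N" using pos by (simp add: N_def)
  have A: "A \<in> carrier_mat N nc"
    unfolding N_def nc_def by (rule carrier_matI) simp_all
  obtain g where g: "g \<in> carrier_mat N N" "invertible_mat g"
    "g *\<^sub>v col A c = unit_vec N (N - 1)" "P = delete_last_row_col (g * A) c"
    using P unfolding N_def by (rule proj_repsE)
  obtain g' where g': "g' \<in> carrier_mat N N" "invertible_mat g'"
    "g' *\<^sub>v col A c = unit_vec N (N - 1)" "Q = delete_last_row_col (g' * A) c"
    using Q unfolding N_def by (rule proj_repsE)
  obtain G' where G': "G' \<in> carrier_mat N N" "g' * G' = 1\<^sub>m N" "G' * g' = 1\<^sub>m N"
    using invertible_matE[OF g'(1,2)] .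
  define h where "h = g * G'"
  have h: "h \<in> carrier_mat N N" using g(1) G'(1) by (simp add: h_def)
  have Ac: "col A c \<in> carrier_vec N" by (rule carrier_vecI) (simp add: N_def)
  have "G' *\<^sub>v unit_vec N (N - 1) = G' *\<^sub>v (g' *\<^sub>v col A c)"
    by (simp only: g'(3))
  also have "\<dots> = (G' * g') *\<^sub>v col A c"
    using G'(1) g'(1) Ac by simp
  also have "\<dots> = col A c"
    using Ac by (simp add: G'(3))
  finally have G'_Ac: "G' *\<^sub>v unit_vec N (N - 1) = col A c" .
  have "col h (N - 1) = (g * G') *\<^sub>v unit_vec N (N - 1)"
    using col_eq_mult_unit_vec[OF h] N by (simp add: h_def)
  also have "\<dots> = g *\<^sub>v (G' *\<^sub>v unit_vec N (N - 1))"
    using g(1) G'(1) by simp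
  also have "\<dots> = unit_vec N (N - 1)"
    by (simp only: G'_Ac g(3))
  finally have h_last: "col h (N - 1) = unit_vec N (N - 1)" .
  have "invertible_mat G'"
    using invertible_matI[OF G'(1) g'(1) G'(3) G'(2)] .
  then have "invertible_mat h"
    unfolding h_def by (rule invertible_mat_mult[OF g(1) G'(1) g(2)])
  have g'A: "g' * A \<in> carrier_mat N nc" using g'(1) A by simp
  have "h * (g' * A) = g * ((G' * g') * A)"
    using g(1) G'(1) g'(1) A by (simp add: h_def assoc_mult_mat[of _ N N _ N _ nc])
  also have "\<dots> = g * A"
    using A by (simp add: G'(3))
  finally have "P = delete_last_row_col (h * (g' * A)) c"
    using g(4) by simp
  also have "\<dots> = delete_last_row_col h (N - 1) * Q"
    unfolding g'(4) by (rule delete_last_row_col_mult[OF h h_last g'A N])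
  finally have P_eq: "P = delete_last_row_col h (N - 1) * Q" .
  have h_inv: "invertible_mat (delete_last_row_col h (N - 1))"
    using invertible_delete_last_row_col[OF h h_last \<open>invertible_mat h\<close> N] .
  have h_carrier: "delete_last_row_col h (N - 1) \<in> carrier_mat (N - 1) (N - 1)"
    using delete_last_row_col_carrier[OF h] .
  have Q_carrier: "Q \<in> carrier_mat (N - 1) (nc - 1)"
    unfolding g'(4) using delete_last_row_col_carrier[OF g'A] .
  have "dim_row P = N - 1" "dim_col P = nc - 1"
    unfolding P_eq using carrier_matD[OF h_carrier] carrier_matD[OF Q_carrier] by simp_all
  then show ?thesis
    unfolding DJ_equiv_def using h_carrier h_inv Q_carrier P_eq by auto
qed

text \<open>Add \<open>v\<^sub>i\<close> times the last row to row \<open>i\<close> and negate the last row. This is an involution,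
  and it sends \<open>v\<close> to the last unit vector as soon as the last entry of \<open>v\<close> is \<open>-1\<close>.\<close>

definition pivot_mat :: "nat \<Rightarrow> 'a::comm_ring_1 vec \<Rightarrow> 'a mat" where
  "pivot_mat N v = mat N N (\<lambda>(i, j).
     (if i = j then (if i = N - 1 then -1 else 1) else 0) + (if j = N - 1 \<and> i < N - 1 then v $ i else 0))"

lemma dim_pivot_mat [simp]: "dim_row (pivot_mat N v) = N" "dim_col (pivot_mat N v) = N"
  by (simp_all add: pivot_mat_def)

lemma pivot_mat_carrier [simp]: "pivot_mat N v \<in> carrier_mat N N"
  by (rule carrier_matI) simp_all

lemma index_pivot_mat_mult_vec:
  fixes u :: "'a::comm_ring_1 vec"
  assumes x: "x \<in> carrier_vec N" and i: "i < N"
  shows "(pivot_mat N u *\<^sub>v x) $ i = (if i < N - 1 then x $ i + u $ i * x $ (N - 1) else - x $ (N - 1))"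
proof -
  have "(pivot_mat N u *\<^sub>v x) $ i = (\<Sum>l<N. pivot_mat N u $$ (i, l) * x $ l)"
    using x i by (simp add: scalar_prod_def atLeast0LessThan)
  also have "\<dots> = (\<Sum>l<N. (if l = i then (if i = N - 1 then - x $ l else x $ l) else 0)
      + (if l = N - 1 then (if i < N - 1 then u $ i * x $ l else 0) else 0))"
    by (intro sum.cong) (auto simp: pivot_mat_def i)
  also have "\<dots> = (if i < N - 1 then x $ i + u $ i * x $ (N - 1) else - x $ (N - 1))"
    using i by (auto simp: sum.distrib)
  finally show ?thesis .
qed

lemma index_pivot_mat_mult:
  fixes u :: "'a::comm_ring_1 vec"
  assumes X: "X \<in> carrier_mat N nc" and i: "i < N" and j: "j < nc"
  shows "(pivot_mat N u * X) $$ (i, j)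
    = (if i < N - 1 then X $$ (i, j) + u $ i * X $$ (N - 1, j) else - X $$ (N - 1, j))"
proof -
  have "(pivot_mat N u * X) $$ (i, j) = (pivot_mat N u *\<^sub>v col X j) $ i"
    using X i j by simp
  also have "\<dots> = (if i < N - 1 then X $$ (i, j) + u $ i * X $$ (N - 1, j) else - X $$ (N - 1, j))"
    using X i j by (subst index_pivot_mat_mult_vec) auto
  finally show ?thesis .
qed

lemma pivot_mat_involution:
  assumes "0 < N"
  shows "pivot_mat N v * pivot_mat N v = 1\<^sub>m N"
proof (rule eq_matI)
  fix i j
  assume "i < dim_row (1\<^sub>m N :: 'a mat)" "j < dim_col (1\<^sub>m N :: 'a mat)"
  then show "(pivot_mat N v * pivot_mat N v) $$ (i, j) = 1\<^sub>m N $$ (i, j)"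
    using assms by (subst index_pivot_mat_mult[OF pivot_mat_carrier]) (auto simp: pivot_mat_def)
qed auto

lemma pivot_mat_proj_rep:
  fixes A :: "'a::comm_ring_1 mat"
  assumes A: "A \<in> carrier_mat N nc" and c: "c < nc" and N: "0 < N"
    and pivot: "A $$ (N - 1, c) = -1"
  shows "delete_last_row_col (pivot_mat N (col A c) * A) c \<in> proj_reps A c"
proof -
  have "pivot_mat N (col A c) *\<^sub>v col A c = unit_vec N (N - 1)"
  proof (rule eq_vecI)
    fix i
    assume "i < dim_vec (unit_vec N (N - 1) :: 'a vec)"
    then show "(pivot_mat N (col A c) *\<^sub>v col A c) $ i = unit_vec N (N - 1) $ i"
      using A c pivot by (subst index_pivot_mat_mult_vec) auto
  qed simp
  moreover have "invertible_mat (pivot_mat N (col A c))"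
    using pivot_mat_involution[OF N] by (intro invertible_matI[of _ N "pivot_mat N (col A c)"]) auto
  ultimately show ?thesis
    using A unfolding proj_reps_def by auto
qed

lemma index_delete_pivot_mat_mult:
  fixes A :: "'a::comm_ring_1 mat"
  assumes A: "A \<in> carrier_mat N nc" and c: "c < nc" and i: "i < N - 1" and j: "j < nc - 1"
  defines "j' \<equiv> if j < c then j else Suc j"
  shows "delete_last_row_col (pivot_mat N (col A c) * A) c $$ (i, j)
    = A $$ (i, j') + A $$ (i, c) * A $$ (N - 1, j')"
proof -
  have "delete_last_row_col (pivot_mat N (col A c) * A) c $$ (i, j)
      = (pivot_mat N (col A c) * A) $$ (i, j')"
    using A i j by (simp add: j'_def)
  also have "\<dots> = A $$ (i, j') + A $$ (i, c) * A $$ (N - 1, j')"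
    using A c i j by (subst index_pivot_mat_mult[OF A]) (auto simp: j'_def)
  finally show ?thesis .
qed

lemma M_mat_carrier:
  "M_mat \<Lambda> rs \<in> carrier_mat (dim_row \<Lambda> + length rs) (dim_col \<Lambda> + length rs)"
  by (rule carrier_matI) (simp_all add: M_mat_def Let_def)

text \<open>The columns of \<open>M(\<Lambda>; r\<^sup>1, \<dots>, r\<^sup>k)\<close> other than \<open>k\<^sub>1\<close>, in 0-based position: \<open>i\<^sub>1\<close> and
  \<open>i\<^sub>2\<close> for \<open>i < k\<close>, then \<open>k\<^sub>2\<close> (relabelled \<open>k\<close>), then \<open>i > k\<close>.\<close>

lemma column_skip_cases:
  fixes j K1 m :: nat
  assumes "j < m + K1"
  obtains (pair_first) p where "j = 2 * p" "p < K1"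
    | (pair_second) p where "j = Suc (2 * p)" "p < K1"
    | (pivot) "j = 2 * K1"
    | (plain) q where "j = q + K1" "K1 < q" "q < m"
proof -
  consider "j < 2 * K1" | "j = 2 * K1" | "2 * K1 < j" by linarith
  then show thesis
  proof cases
    case 1
    then show thesis
      using that(1,2)[of "j div 2"] by (cases "even j") (auto simp: odd_two_times_div_two_succ)
  next
    case 3
    then show thesis
      using that(4)[of "j - K1"] assms by simp
  qed (use that(3) in blast)
qed

lemma M_mat_pivot_entry:
  fixes \<Lambda> :: "'a::comm_ring_1 mat" and s :: "'a vec"
  assumes L: "\<Lambda> \<in> carrier_mat n m" and rs: "set rs \<subseteq> carrier_vec m" and km: "length rs < m"
    and i: "i < n + length rs" and j: "j < m + length rs"
  defines "M \<equiv> M_mat \<Lambda> (rs @ [s])" and "k \<equiv> Suc (length rs)"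
    and "j' \<equiv> if j < 2 * length rs then j else Suc j"
  shows "M $$ (i, j') + M $$ (i, 2 * length rs) * M $$ (n + length rs, j')
    = M_mat (Lambda_twist \<Lambda> s k) (map (\<lambda>\<rho>. row_twist \<rho> s k) rs) $$ (i, j)"
proof -
  have odd: "Suc (2 * length rs) mod 2 = 1" by presburger
  consider (top) "i < n" | (bottom) t where "i = n + t" "t < length rs"
    using i by (metis add_diff_inverse_nat nat_add_left_cancel_less)
  then show ?thesis
  proof cases
    case top
    show ?thesis using j
      by (cases rule: column_skip_cases)
        (use L km top odd in \<open>simp_all add: M_def k_def j'_def M_mat_def Lambda_twist_def
          Let_def nth_append algebra_simps\<close>)
  next
    case (bottom t)
    then have "rs ! t \<in> carrier_vec m" using rs by auto
    with j show ?thesis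
      by (cases rule: column_skip_cases)
        (use L km bottom odd in \<open>simp_all add: M_def k_def j'_def M_mat_def Lambda_twist_def
          row_twist_def Let_def nth_append algebra_simps\<close>)
  qed
qed

text \<open>Reducedness \<open>r\<^sup>k\<^sub>k = 0\<close> makes the last entry of column \<open>k\<^sub>1\<close> equal to \<open>-1\<close>.\<close>

lemma M_mat_twist_proj_rep:
  fixes \<Lambda> :: "'a::comm_ring_1 mat" and s :: "'a vec"
  assumes L: "\<Lambda> \<in> carrier_mat n m" and rs: "set rs \<subseteq> carrier_vec m" and km: "length rs < m"
    and s: "s $ length rs = 0"
  defines "k \<equiv> Suc (length rs)"
  shows "M_mat (Lambda_twist \<Lambda> s k) (map (\<lambda>\<rho>. row_twist \<rho> s k) rs)
    \<in> proj_reps (M_mat \<Lambda> (rs @ [s])) (2 * length rs)"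
proof -
  define M where "M = M_mat \<Lambda> (rs @ [s])"
  define M' where "M' = M_mat (Lambda_twist \<Lambda> s k) (map (\<lambda>\<rho>. row_twist \<rho> s k) rs)"
  define N where "N = n + k"
  have M: "M \<in> carrier_mat N (m + k)"
    using M_mat_carrier[of \<Lambda> "rs @ [s]"] L by (simp add: M_def N_def k_def)
  have M': "M' \<in> carrier_mat (n + length rs) (m + length rs)"
    using M_mat_carrier[of "Lambda_twist \<Lambda> s k" "map (\<lambda>\<rho>. row_twist \<rho> s k) rs"] L
    by (simp add: M'_def Lambda_twist_def)
  have c: "2 * length rs < m + k" using km by (simp add: k_def)
  have pivot: "M $$ (N - 1, 2 * length rs) = -1"
    using L km s by (simp add: M_def N_def k_def M_mat_def Let_def nth_append)
  have "delete_last_row_col (pivot_mat N (col M (2 * length rs)) * M) (2 * length rs) = M'"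
  proof (rule eq_matI)
    fix i j
    assume "i < dim_row M'" "j < dim_col M'"
    then have i: "i < n + length rs" and j: "j < m + length rs" using M' by auto
    show "delete_last_row_col (pivot_mat N (col M (2 * length rs)) * M) (2 * length rs) $$ (i, j)
      = M' $$ (i, j)"
      using index_delete_pivot_mat_mult[OF M c, of i j] M_mat_pivot_entry[OF L rs km i j, of s] i j
      by (simp add: M_def M'_def N_def k_def)
  qed (use M M' in \<open>simp_all add: N_def k_def\<close>)
  then show ?thesis
    using pivot_mat_proj_rep[OF M c _ pivot] by (simp add: M_def M'_def N_def k_def)
qed

theorem mainTheorem9:
  fixes K :: "nat set set" and m n k :: nat
    and \<Lambda> :: "'a::comm_ring_1 mat" and r :: "nat \<Rightarrow> 'a vec"
  assumes R: "R_is_Z_or_Z2 TYPE('a)"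
    and K: "star_shaped_sphere TYPE('n::finite) K m n"
    and char: "characteristic_map K m n \<Lambda>"
    and k: "1 \<le> k"
    and red: "\<forall>t\<in>{1..k}. reduced_marked m (r t) t"
  shows "proj_reps (M_mat \<Lambda> (map r [1..<k+1])) (2 * (k - 1)) \<noteq> {} \<and>
         (\<forall>P \<in> proj_reps (M_mat \<Lambda> (map r [1..<k+1])) (2 * (k - 1)).
            DJ_equiv P (M_mat (Lambda_twist \<Lambda> (r k) k)
                              (map (\<lambda>t. row_twist (r t) (r k) k) [1..<k])))"
proof -
  define rs where "rs = map r [1..<k]"
  have len: "Suc (length rs) = k" using k by (simp add: rs_def)
  have L: "\<Lambda> \<in> carrier_mat n m" using char by (simp add: characteristic_map_def)
  have rs: "set rs \<subseteq> carrier_vec m" using red by (auto simp: rs_def reduced_marked_def)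
  have "reduced_marked m (r k) k" using red k by simp
  then have km: "length rs < m" and s: "r k $ length rs = 0"
    using len by (auto simp: reduced_marked_def)
  have rows: "map r [1..<k+1] = rs @ [r k]" using k by (simp add: rs_def)
  have twisted: "map (\<lambda>t. row_twist (r t) (r k) k) [1..<k] = map (\<lambda>\<rho>. row_twist \<rho> (r k) k) rs"
    by (simp add: rs_def)
  have rep: "M_mat (Lambda_twist \<Lambda> (r k) k) (map (\<lambda>t. row_twist (r t) (r k) k) [1..<k])
      \<in> proj_reps (M_mat \<Lambda> (map r [1..<k+1])) (2 * (k - 1))"
    using M_mat_twist_proj_rep[OF L rs km s] unfolding rows twisted len
    by (simp flip: len)
  have "0 < dim_row (M_mat \<Lambda> (map r [1..<k+1]))"
    using M_mat_carrier[of \<Lambda> "map r [1..<k+1]"] k by simp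
  with rep show ?thesis
    using proj_reps_DJ_equiv by blast
qed

end
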